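(* If an invariant state $\rho$ is supported on $\Omega=\{|-\rangle,|+\rangle,\varphi_{0_1},\varphi_{0_N}\}^\perp$, then $\rho$ is supported on $V$.
   Context: Fix integers $N\ge 2$ and $n_1\ge n_2\ge\dots\ge n_N\ge 1$. Let $\mathcal H$ be a finite-dimensional complex Hilbert space with orthonormal basis $\{|-\rangle,|+\rangle\}\cup\{|a_k\rangle:1\le k\le N,\ 0\le a\le n_k-1\}$. For vectors $x,y$, $|x\rangle\langle y|$ denotes the operator $u\mapsto\langle y,u\rangle x$. Put $E_k=\mathrm{span}\{|a_k\rangle:0\le a\le n_k-1\}$, $P_k$ the orthogonal projection onto $E_k$, $P_\pm=|\pm\rangle\langle\pm|$, $\zeta_k=e^{2\pi i/n_k}$, and $\varphi_{a_k}=n_k^{-1/2}\sum_{b=0}^{n_k-1}\zeta_k^{-ba}|b_k\rangle$ for $0\le a\le n_k-1$. For $1\le k\le N-1$ let $Z_k=n_k^{-1/2}\sum_{b=0}^{n_{k+1}-1}\sum_{a=0}^{n_k-1}\zeta_k^{ba}|b_{k+1}\rangle\langle a_k|$ (an operator on $\mathcal H$), $|Z|_k=Z_k^*Z_k$. The transport operator is $Z=\sum_{k=1}^{N-1}Z_k$. Let $\omega$ range over the set $\{\omega_+,\omega_-,\omega_1,\dots,\omega_{N-1}\}$ of (distinct) Bohr frequencies, and let $\Gamma_{\pm,\omega}>0$, $\gamma_{\pm,\omega}\in\mathbb R$ be constants. Kraus operators: $L_{-,\omega_+}=\sqrt{n_1\Gamma_{-,\omega_+}}|\varphi_{0_1}\rangle\langle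 +|$, $L_{+,\omega_+}=\sqrt{n_1\Gamma_{+,\omega_+}}|+\rangle\langle\varphi_{0_1}|$, $L_{-,\omega_k}=\sqrt{\Gamma_{-,\omega_k}}Z_k$, $L_{+,\omega_k}=\sqrt{\Gamma_{+,\omega_k}}Z_k^*$ ($1\le k\le N-1$), $L_{-,\omega_-}=\sqrt{\Gamma_{-,\omega_-}}|-\rangle\langle\varphi_{0_N}|$, $L_{+,\omega_-}=0$. Effective Hamiltonian $H_{\mathrm{eff}}=n_1\gamma_{-,\omega_+}P_+-n_1\gamma_{+,\omega_+}|\varphi_{0_1}\rangle\langle\varphi_{0_1}|+\gamma_{-,\omega_-}|\varphi_{0_N}\rangle\langle\varphi_{0_N}|-\gamma_{+,\omega_-}P_-+\sum_{k=1}^{N-1}(\gamma_{-,\omega_k}|Z|_k-\gamma_{+,\omega_k}P_{k+1})$. The generator is $\mathcal L(\rho)=-i[H_{\mathrm{eff}},\rho]+\sum_{\omega}\sum_{\epsilon=\pm}\big(L_{\epsilon,\omega}\rho L_{\epsilon,\omega}^*-\tfrac12\{L_{\epsilon,\omega}^*L_{\epsilon,\omega},\rho\}\big)$. A state is a positive operator of trace one; it is invariant if $\mathcal L(\rho)=0$; an operator is supported on a subspace $E$ if its range is contained in $E$. $V$ is the orthogonal complement of the set $\{|-\rangle,|+\rangle,Z^n\varphi_{0_1},Z^{*n}\varphi_{0_N},Z^{*s}\varphi_{0_{2m+1}}:0\le n\le N-1,\ 1\le m\le (N-1)/2,\ 1\le s\le 2m\}$. *)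

theory Defs
  imports Complex_Main
begin

text \<open>Basis labels: KMinus = |->, KPlus = |+>, Site k a = |a_k> (1 <= k <= N, a < n k).
  Vectors are functions idx => complex vanishing off the basis,
  operators are matrices idx => idx => complex vanishing off basis x basis.\<close>

datatype idx = KMinus | KPlus | Site nat nat

datatype sign = SMinus | SPlus

datatype freq = WPlus | WMinus | Wk nat

type_synonym vec = "idx \<Rightarrow> complex"
type_synonym op = "idx \<Rightarrow> idx \<Rightarrow> complex"

definition basis :: "nat \<Rightarrow> (nat \<Rightarrow> nat) \<Rightarrow> idx set" where
  "basis N n = {KMinus, KPlus} \<union> {Site k a | k a. 1 \<le> k \<and> k \<le> N \<and> a < n k}"

definition hspace :: "nat \<Rightarrow> (nat \<Rightarrow> nat) \<Rightarrow> vec set" where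
  "hspace N n = {x. \<forall>i. i \<notin> basis N n \<longrightarrow> x i = 0}"

definition is_operator :: "nat \<Rightarrow> (nat \<Rightarrow> nat) \<Rightarrow> op \<Rightarrow> bool" where
  "is_operator N n A \<longleftrightarrow> (\<forall>i j. (i \<notin> basis N n \<or> j \<notin> basis N n) \<longrightarrow> A i j = 0)"

definition inner_h :: "nat \<Rightarrow> (nat \<Rightarrow> nat) \<Rightarrow> vec \<Rightarrow> vec \<Rightarrow> complex" where
  "inner_h N n x y = (\<Sum>i\<in>basis N n. cnj (x i) * y i)"

definition app :: "nat \<Rightarrow> (nat \<Rightarrow> nat) \<Rightarrow> op \<Rightarrow> vec \<Rightarrow> vec" where
  "app N n A x = (\<lambda>i. \<Sum>j\<in>basis N n. A i j * x j)"

definition mmul :: "nat \<Rightarrow> (nat \<Rightarrow> nat) \<Rightarrow> op \<Rightarrow> op \<Rightarrow> op" where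
  "mmul N n A C = (\<lambda>i j. \<Sum>l\<in>basis N n. A i l * C l j)"

definition adj :: "op \<Rightarrow> op" where
  "adj A = (\<lambda>i j. cnj (A j i))"

definition outer :: "vec \<Rightarrow> vec \<Rightarrow> op" where
  "outer x y = (\<lambda>i j. x i * cnj (y j))"

definition ket :: "idx \<Rightarrow> vec" where
  "ket i = (\<lambda>j. if j = i then 1 else 0)"

definition zeta :: "(nat \<Rightarrow> nat) \<Rightarrow> nat \<Rightarrow> complex" where
  "zeta n k = cis (2 * pi / real (n k))"

definition phi :: "nat \<Rightarrow> (nat \<Rightarrow> nat) \<Rightarrow> nat \<Rightarrow> nat \<Rightarrow> vec" where
  "phi N n k a = (\<lambda>i. case i of
      Site k' b \<Rightarrow> if k' = k \<and> Site k' b \<in> basis N n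
                   then inverse (zeta n k) ^ (b * a) / complex_of_real (sqrt (real (n k)))
                   else 0
    | _ \<Rightarrow> 0)"

definition Zk :: "nat \<Rightarrow> (nat \<Rightarrow> nat) \<Rightarrow> nat \<Rightarrow> op" where
  "Zk N n k = (\<lambda>i j. case (i, j) of
      (Site k1 b, Site k0 a) \<Rightarrow>
         if k1 = k + 1 \<and> k0 = k \<and> Site k1 b \<in> basis N n \<and> Site k0 a \<in> basis N n
         then zeta n k ^ (b * a) / complex_of_real (sqrt (real (n k)))
         else 0
    | _ \<Rightarrow> 0)"

definition absZk :: "nat \<Rightarrow> (nat \<Rightarrow> nat) \<Rightarrow> nat \<Rightarrow> op" where
  "absZk N n k = mmul N n (adj (Zk N n k)) (Zk N n k)"

definition Ztr :: "nat \<Rightarrow> (nat \<Rightarrow> nat) \<Rightarrow> op" where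
  "Ztr N n = (\<lambda>i j. \<Sum>k\<in>{1..N-1}. Zk N n k i j)"

definition Pk :: "nat \<Rightarrow> (nat \<Rightarrow> nat) \<Rightarrow> nat \<Rightarrow> op" where
  "Pk N n k = (\<lambda>i j. if i = j \<and> (\<exists>a. i = Site k a \<and> a < n k) \<and> i \<in> basis N n then 1 else 0)"

definition Heff :: "nat \<Rightarrow> (nat \<Rightarrow> nat) \<Rightarrow> (sign \<Rightarrow> freq \<Rightarrow> real) \<Rightarrow> op" where
  "Heff N n g = (\<lambda>i j.
       complex_of_real (real (n 1) * g SMinus WPlus) * outer (ket KPlus) (ket KPlus) i j
     - complex_of_real (real (n 1) * g SPlus WPlus) * outer (phi N n 1 0) (phi N n 1 0) i j
     + complex_of_real (g SMinus WMinus) * outer (phi N n N 0) (phi N n N 0) i j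
     - complex_of_real (g SPlus WMinus) * outer (ket KMinus) (ket KMinus) i j
     + (\<Sum>k\<in>{1..N-1}. complex_of_real (g SMinus (Wk k)) * absZk N n k i j
                      - complex_of_real (g SPlus (Wk k)) * Pk N n (k + 1) i j))"

definition csqrt_r :: "real \<Rightarrow> complex" where
  "csqrt_r x = complex_of_real (sqrt x)"

definition kraus :: "nat \<Rightarrow> (nat \<Rightarrow> nat) \<Rightarrow> (sign \<Rightarrow> freq \<Rightarrow> real) \<Rightarrow> sign \<Rightarrow> freq \<Rightarrow> op" where
  "kraus N n G e w = (case (e, w) of
      (SMinus, WPlus) \<Rightarrow> (\<lambda>i j. csqrt_r (real (n 1) * G SMinus WPlus) * outer (phi N n 1 0) (ket KPlus) i j)
    | (SPlus, WPlus) \<Rightarrow> (\<lambda>i j. csqrt_r (real (n 1) * G SPlus WPlus) * outer (ket KPlus) (phi N n 1 0) i j)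
    | (SMinus, Wk k) \<Rightarrow> (\<lambda>i j. csqrt_r (G SMinus (Wk k)) * Zk N n k i j)
    | (SPlus, Wk k) \<Rightarrow> (\<lambda>i j. csqrt_r (G SPlus (Wk k)) * adj (Zk N n k) i j)
    | (SMinus, WMinus) \<Rightarrow> (\<lambda>i j. csqrt_r (G SMinus WMinus) * outer (ket KMinus) (phi N n N 0) i j)
    | (SPlus, WMinus) \<Rightarrow> (\<lambda>i j. 0))"

definition freqs :: "nat \<Rightarrow> freq set" where
  "freqs N = {WPlus, WMinus} \<union> Wk ` {1..N-1}"

definition dissip :: "nat \<Rightarrow> (nat \<Rightarrow> nat) \<Rightarrow> op \<Rightarrow> op \<Rightarrow> op" where
  "dissip N n L \<rho> = (\<lambda>i j.
      mmul N n (mmul N n L \<rho>) (adj L) i j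
    - (1/2) * (mmul N n (mmul N n (adj L) L) \<rho> i j + mmul N n \<rho> (mmul N n (adj L) L) i j))"

definition generator :: "nat \<Rightarrow> (nat \<Rightarrow> nat) \<Rightarrow> (sign \<Rightarrow> freq \<Rightarrow> real) \<Rightarrow> (sign \<Rightarrow> freq \<Rightarrow> real) \<Rightarrow> op \<Rightarrow> op" where
  "generator N n G g \<rho> = (\<lambda>i j.
      - \<i> * (mmul N n (Heff N n g) \<rho> i j - mmul N n \<rho> (Heff N n g) i j)
    + (\<Sum>w\<in>freqs N. \<Sum>e\<in>{SMinus, SPlus}. dissip N n (kraus N n G e w) \<rho> i j))"

definition is_state :: "nat \<Rightarrow> (nat \<Rightarrow> nat) \<Rightarrow> op \<Rightarrow> bool" where
  "is_state N n \<rho> \<longleftrightarrow> is_operator N n \<rho>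
     \<and> (\<forall>x \<in> hspace N n. inner_h N n x (app N n \<rho> x) \<in> \<real> \<and> 0 \<le> Re (inner_h N n x (app N n \<rho> x)))
     \<and> (\<Sum>i\<in>basis N n. \<rho> i i) = 1"

definition invariant :: "nat \<Rightarrow> (nat \<Rightarrow> nat) \<Rightarrow> (sign \<Rightarrow> freq \<Rightarrow> real) \<Rightarrow> (sign \<Rightarrow> freq \<Rightarrow> real) \<Rightarrow> op \<Rightarrow> bool" where
  "invariant N n G g \<rho> \<longleftrightarrow> generator N n G g \<rho> = (\<lambda>i j. 0)"

definition perp :: "nat \<Rightarrow> (nat \<Rightarrow> nat) \<Rightarrow> vec set \<Rightarrow> vec set" where
  "perp N n S = {y \<in> hspace N n. \<forall>s\<in>S. inner_h N n s y = 0}"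

definition supported_on :: "nat \<Rightarrow> (nat \<Rightarrow> nat) \<Rightarrow> op \<Rightarrow> vec set \<Rightarrow> bool" where
  "supported_on N n A E \<longleftrightarrow> (\<forall>x \<in> hspace N n. app N n A x \<in> E)"

definition Omega :: "nat \<Rightarrow> (nat \<Rightarrow> nat) \<Rightarrow> vec set" where
  "Omega N n = perp N n {ket KMinus, ket KPlus, phi N n 1 0, phi N n N 0}"

definition Vsp :: "nat \<Rightarrow> (nat \<Rightarrow> nat) \<Rightarrow> vec set" where
  "Vsp N n = perp N n (
       {(app N n (Ztr N n) ^^ m) (phi N n 1 0) | m. m \<le> N - 1}
     \<union> {(app N n (adj (Ztr N n)) ^^ m) (phi N n N 0) | m. m \<le> N - 1}
     \<union> {(app N n (adj (Ztr N n)) ^^ s) (phi N n (2 * m + 1) 0) | m s.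
           1 \<le> m \<and> 2 * m + 1 \<le> N \<and> 1 \<le> s \<and> s \<le> 2 * m})"

end

theory Submission
  imports Defs "HOL-Library.Complex_Order"
begin

text \<open>Everything happens in the kernel of \<rho>. As \<rho> is positive, v lies in the kernel as soon as
  <v, \<rho> v> = 0. For v in the kernel the commutator part of the generator contributes nothing to
  <v, L(\<rho>) v>, and each dissipator contributes <L^* v, \<rho> L^* v> \<ge> 0; invariance makes the sum
  vanish, so the kernel is invariant under every L^*, in particular under Z_k and Z_k^*, hence
  under Z and Z^*. Support on \<Omega> puts phi_{0_1} and phi_{0_N} into the kernel, and since
  Z_{k+1} Z_k phi_{0_k} is a nonzero multiple of phi_{0_{k+2}} (this uses n_{k+1} \<le> n_k), so are all
  phi_{0_{2m+1}}. Thus the kernel contains the complement of V, and the range of the hermitian \<rho>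
  is orthogonal to it.\<close>

lemma finite_basis [simp]: "finite (basis N n)"
proof -
  have "basis N n \<subseteq> {KMinus, KPlus} \<union> (\<lambda>(k, a). Site k a) ` (SIGMA k:{1..N}. {..<n k})"
    unfolding basis_def by auto
  then show ?thesis by (rule finite_subset) auto
qed

lemma Site_in_basis [simp]: "Site k a \<in> basis N n \<longleftrightarrow> 1 \<le> k \<and> k \<le> N \<and> a < n k"
  unfolding basis_def by auto

lemma sum_basis_Site:
  assumes "1 \<le> k" "k \<le> N"
    and "\<And>j. j \<in> basis N n \<Longrightarrow> j \<notin> Site k ` {..<n k} \<Longrightarrow> f j = 0"
  shows "(\<Sum>j\<in>basis N n. f j) = (\<Sum>a<n k. f (Site k a))"
proof -
  have "(\<Sum>j\<in>basis N n. f j) = (\<Sum>j\<in>Site k ` {..<n k}. f j)"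
    by (rule sum.mono_neutral_right) (use assms in auto)
  also have "\<dots> = (\<Sum>a<n k. f (Site k a))"
    by (rule sum.reindex_cong[where l = "Site k"]) (auto simp: inj_on_def)
  finally show ?thesis .
qed

lemma inner_h_ket_left: "j \<in> basis N n \<Longrightarrow> inner_h N n (ket j) x = x j"
proof -
  have "cnj (ket j i) * x i = (if i = j then x i else 0)" for i
    unfolding ket_def by simp
  then show "j \<in> basis N n \<Longrightarrow> inner_h N n (ket j) x = x j"
    unfolding inner_h_def by simp
qed

lemma inner_h_ket_right: "j \<in> basis N n \<Longrightarrow> inner_h N n x (ket j) = cnj (x j)"
  unfolding inner_h_def ket_def by (simp add: if_distrib cong: if_cong)

lemma app_ket: "j \<in> basis N n \<Longrightarrow> app N n A (ket j) i = A i j"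
  unfolding app_def ket_def by (simp add: if_distrib cong: if_cong)

lemma app_cong: "(\<And>j. j \<in> basis N n \<Longrightarrow> x j = y j) \<Longrightarrow> app N n A x = app N n A y"
  unfolding app_def by (intro ext sum.cong) auto

lemma inner_h_cong:
  "(\<And>j. j \<in> basis N n \<Longrightarrow> x j = x' j) \<Longrightarrow> (\<And>j. j \<in> basis N n \<Longrightarrow> y j = y' j)
    \<Longrightarrow> inner_h N n x y = inner_h N n x' y'"
  unfolding inner_h_def by (rule sum.cong) auto

lemma app_zero [simp]: "app N n A (\<lambda>j. 0) = (\<lambda>i. 0)"
  unfolding app_def by simp

lemma inner_h_zero_right [simp]: "inner_h N n x (\<lambda>i. 0) = 0"
  unfolding inner_h_def by simp

lemma app_add_scaled:
  "app N n A (\<lambda>j. x j + c * y j) = (\<lambda>i. app N n A x i + c * app N n A y i)"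
  unfolding app_def by (simp add: sum.distrib sum_distrib_left algebra_simps)

lemma inner_h_add_scaled_left:
  "inner_h N n (\<lambda>j. x j + c * y j) z = inner_h N n x z + cnj c * inner_h N n y z"
  unfolding inner_h_def by (simp add: sum.distrib sum_distrib_left algebra_simps)

lemma inner_h_add_scaled_right:
  "inner_h N n z (\<lambda>j. x j + c * y j) = inner_h N n z x + c * inner_h N n z y"
  unfolding inner_h_def by (simp add: sum.distrib sum_distrib_left algebra_simps)

lemma inner_h_app_adj: "inner_h N n x (app N n A y) = inner_h N n (app N n (adj A) x) y"
proof -
  have "inner_h N n x (app N n A y) = (\<Sum>i\<in>basis N n. \<Sum>j\<in>basis N n. cnj (x i) * A i j * y j)"
    unfolding inner_h_def app_def by (simp add: sum_distrib_left mult.assoc)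
  also have "\<dots> = (\<Sum>j\<in>basis N n. \<Sum>i\<in>basis N n. cnj (x i) * A i j * y j)"
    by (rule sum.swap)
  also have "\<dots> = inner_h N n (app N n (adj A) x) y"
    unfolding inner_h_def app_def adj_def by (simp add: sum_distrib_left mult_ac)
  finally show ?thesis .
qed

lemma app_mmul: "app N n (mmul N n A C) x = app N n A (app N n C x)"
proof
  fix i
  have "app N n (mmul N n A C) x i = (\<Sum>j\<in>basis N n. \<Sum>l\<in>basis N n. A i l * C l j * x j)"
    unfolding app_def mmul_def by (simp add: sum_distrib_right)
  also have "\<dots> = (\<Sum>l\<in>basis N n. \<Sum>j\<in>basis N n. A i l * C l j * x j)"
    by (rule sum.swap)
  also have "\<dots> = app N n A (app N n C x) i"
    unfolding app_def by (simp add: sum_distrib_left mult.assoc)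
  finally show "app N n (mmul N n A C) x i = app N n A (app N n C x) i" .
qed

lemma app_scale_op: "app N n (\<lambda>i j. c * A i j) x = (\<lambda>i. c * app N n A x i)"
  unfolding app_def by (simp add: sum_distrib_left mult.assoc)

lemma app_sum_op: "app N n (\<lambda>i j. \<Sum>k\<in>K. A k i j) x = (\<lambda>i. \<Sum>k\<in>K. app N n (A k) x i)"
  unfolding app_def by (simp add: sum_distrib_right) (rule ext, rule sum.swap)

lemma inner_h_app_add_op:
  "inner_h N n x (app N n (\<lambda>i j. A i j + C i j) y)
    = inner_h N n x (app N n A y) + inner_h N n x (app N n C y)"
  unfolding inner_h_def app_def by (simp add: sum.distrib algebra_simps)

lemma inner_h_app_diff_op:
  "inner_h N n x (app N n (\<lambda>i j. A i j - C i j) y)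
    = inner_h N n x (app N n A y) - inner_h N n x (app N n C y)"
  unfolding inner_h_def app_def by (simp add: sum_subtractf algebra_simps)

lemma inner_h_app_scale_op:
  "inner_h N n x (app N n (\<lambda>i j. c * A i j) y) = c * inner_h N n x (app N n A y)"
  unfolding inner_h_def app_def by (simp add: sum_distrib_left algebra_simps)

lemma inner_h_app_sum_op:
  "inner_h N n x (app N n (\<lambda>i j. \<Sum>k\<in>K. A k i j) y) = (\<Sum>k\<in>K. inner_h N n x (app N n (A k) y))"
  unfolding app_sum_op inner_h_def by (simp add: sum_distrib_left) (rule sum.swap)

definition hermitian :: "nat \<Rightarrow> (nat \<Rightarrow> nat) \<Rightarrow> op \<Rightarrow> bool" where
  "hermitian N n A \<longleftrightarrow> (\<forall>i\<in>basis N n. \<forall>j\<in>basis N n. A j i = cnj (A i j))"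

definition ker_op :: "nat \<Rightarrow> (nat \<Rightarrow> nat) \<Rightarrow> op \<Rightarrow> vec set" where
  "ker_op N n A = {v. \<forall>i\<in>basis N n. app N n A v i = 0}"

lemma app_app_ker_op: "v \<in> ker_op N n A \<Longrightarrow> app N n C (app N n A v) = (\<lambda>i. 0)"
  unfolding ker_op_def app_def by simp

lemma ker_op_scale_iff: "c \<noteq> 0 \<Longrightarrow> (\<lambda>i. c * x i) \<in> ker_op N n A \<longleftrightarrow> x \<in> ker_op N n A"
  unfolding ker_op_def app_def by (simp add: mult.left_commute flip: sum_distrib_left)

lemma ker_op_sum: "(\<And>k. k \<in> K \<Longrightarrow> f k \<in> ker_op N n A) \<Longrightarrow> (\<lambda>i. \<Sum>k\<in>K. f k i) \<in> ker_op N n A"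
  unfolding ker_op_def app_def by (simp add: sum_distrib_left) (subst sum.swap, simp)

lemma app_adj_hermitian:
  assumes "hermitian N n A" "i \<in> basis N n"
  shows "app N n (adj A) x i = app N n A x i"
  unfolding app_def adj_def
proof (rule sum.cong)
  fix j assume "j \<in> basis N n"
  then have "A i j = cnj (A j i)"
    using assms unfolding hermitian_def by (metis complex_cnj_cnj)
  then show "cnj (A j i) * x j = A i j * x j" by simp
qed simp

lemma hermitian_inner_h_ker_op:
  assumes "hermitian N n A" "v \<in> ker_op N n A"
  shows "inner_h N n v (app N n A y) = 0"
proof -
  have "inner_h N n v (app N n A y) = inner_h N n (app N n (adj A) v) y"
    by (rule inner_h_app_adj)
  also have "\<dots> = inner_h N n (\<lambda>i. 0) y"
    by (rule inner_h_cong) (use assms in \<open>auto simp: app_adj_hermitian ker_op_def\<close>)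
  finally show ?thesis by (simp add: inner_h_def)
qed

lemma supported_on_perp_iff_ker_op:
  assumes herm: "hermitian N n A" and op: "is_operator N n A"
  shows "supported_on N n A (perp N n S) \<longleftrightarrow> S \<subseteq> ker_op N n A"
proof
  assume sup: "supported_on N n A (perp N n S)"
  show "S \<subseteq> ker_op N n A"
  proof (intro subsetI CollectI ballI, unfold ker_op_def, intro CollectI ballI)
    fix s j assume s: "s \<in> S" and j: "j \<in> basis N n"
    have "ket j \<in> hspace N n" using j unfolding hspace_def ket_def by auto
    then have "inner_h N n s (app N n A (ket j)) = 0"
      using sup s unfolding supported_on_def perp_def by blast
    moreover have "inner_h N n s (app N n A (ket j)) = cnj (app N n A s j)"
      using j herm by (simp add: inner_h_app_adj inner_h_ket_right app_adj_hermitian)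
    ultimately show "app N n A s j = 0" by simp
  qed
next
  assume ker: "S \<subseteq> ker_op N n A"
  show "supported_on N n A (perp N n S)"
    unfolding supported_on_def perp_def
  proof (intro ballI CollectI conjI)
    fix x assume "x \<in> hspace N n"
    show "app N n A x \<in> hspace N n"
      using op unfolding hspace_def is_operator_def app_def by simp
    fix s assume "s \<in> S"
    then show "inner_h N n s (app N n A x) = 0"
      using ker by (intro hermitian_inner_h_ker_op[OF herm]) auto
  qed
qed

lemma state_quadratic_form_nonneg:
  assumes "is_state N n \<rho>"
  shows "0 \<le> inner_h N n x (app N n \<rho> x)"
proof -
  define x' where "x' = (\<lambda>i. if i \<in> basis N n then x i else 0)"
  have "x' \<in> hspace N n" unfolding x'_def hspace_def by auto
  moreover have "app N n \<rho> x' = app N n \<rho> x"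
    by (rule app_cong) (simp add: x'_def)
  then have "inner_h N n x' (app N n \<rho> x') = inner_h N n x (app N n \<rho> x)"
    by (intro inner_h_cong) (auto simp: x'_def)
  ultimately show ?thesis
    using assms unfolding is_state_def by (auto simp: less_eq_complex_def complex_is_Real_iff)
qed

lemma state_hermitian:
  assumes st: "is_state N n \<rho>"
  shows "hermitian N n \<rho>"
  unfolding hermitian_def
proof (intro ballI)
  fix i j assume i: "i \<in> basis N n" and j: "j \<in> basis N n"
  have "inner_h N n (\<lambda>l. ket i l + c * ket j l) (app N n \<rho> (\<lambda>l. ket i l + c * ket j l))
      = \<rho> i i + c * \<rho> i j + cnj c * (\<rho> j i + c * \<rho> j j)" for c
    by (simp add: app_add_scaled inner_h_add_scaled_left inner_h_add_scaled_right
        inner_h_ket_left app_ket i j)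
  then have "\<rho> i i + c * \<rho> i j + cnj c * (\<rho> j i + c * \<rho> j j) \<in> \<real>" for c
    using state_quadratic_form_nonneg[OF st] nonnegative_complex_is_real by metis
  from this[of 0] this[of 1] this[of "\<i>"] this[of "-\<i>"] show "\<rho> j i = cnj (\<rho> i j)"
    by (auto simp: complex_eq_iff complex_is_Real_iff)
qed

text \<open>Testing positivity on u - t a (ket i) with a = (\<rho> u)_i: the quadratic form becomes
  t |a|^2 (t \<rho>_ii - 2), which is negative for small t > 0 unless a = 0.\<close>

lemma state_quadratic_form_zero_imp_ker_op:
  assumes st: "is_state N n \<rho>" and zero: "inner_h N n u (app N n \<rho> u) = 0"
  shows "u \<in> ker_op N n \<rho>"
  unfolding ker_op_def
proof (intro CollectI ballI)
  fix i assume i: "i \<in> basis N n"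
  define a where "a = app N n \<rho> u i"
  define b where "b = \<rho> i i"
  have b: "0 \<le> b"
    using state_quadratic_form_nonneg[OF st, of "ket i"] by (simp add: inner_h_ket_left app_ket i b_def)
  have "inner_h N n u (app N n \<rho> (ket i)) = cnj a"
    unfolding a_def using i state_hermitian[OF st]
    by (simp add: inner_h_app_adj inner_h_ket_right app_adj_hermitian)
  moreover have "app N n \<rho> (ket i) = (\<lambda>l. \<rho> l i)"
    using i by (simp add: app_ket fun_eq_iff)
  ultimately have "inner_h N n u (\<lambda>l. \<rho> l i) = cnj a" by simp
  then have q: "inner_h N n (\<lambda>l. u l + c * ket i l) (app N n \<rho> (\<lambda>l. u l + c * ket i l))
      = c * cnj a + cnj c * (a + c * b)" for c
    by (simp add: app_add_scaled inner_h_add_scaled_left inner_h_add_scaled_right zero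
        inner_h_ket_left app_ket i a_def b_def)
  define t where "t = 1 / (Re b + 1)"
  have t: "0 < t" "t * Re b < 1" using b by (auto simp: t_def field_simps less_eq_complex_def)
  have "0 \<le> Re (inner_h N n (\<lambda>l. u l + - t * a * ket i l)
      (app N n \<rho> (\<lambda>l. u l + - t * a * ket i l)))"
    using state_quadratic_form_nonneg[OF st] by (simp add: less_eq_complex_def)
  also have "\<dots> = t * (Re a ^ 2 + Im a ^ 2) * (t * Re b - 2)"
    unfolding q using b by (auto simp: less_eq_complex_def algebra_simps power2_eq_square)
  finally have "Re a ^ 2 + Im a ^ 2 \<le> 0"
    using t by (simp add: zero_le_mult_iff mult_le_0_iff)
  then show "app N n \<rho> u i = 0"
    unfolding a_def by (simp add: complex_eq_iff sum_power2_le_zero_iff)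
qed

subsection \<open>The kernel of an invariant state\<close>

lemma dissip_quadratic_form_ker_op:
  assumes herm: "hermitian N n \<rho>" and v: "v \<in> ker_op N n \<rho>"
  shows "inner_h N n v (app N n (dissip N n L \<rho>) v)
       = inner_h N n (app N n (adj L) v) (app N n \<rho> (app N n (adj L) v))"
proof -
  have "inner_h N n v (app N n (dissip N n L \<rho>) v)
      = inner_h N n v (app N n L (app N n \<rho> (app N n (adj L) v)))"
    unfolding dissip_def inner_h_app_diff_op inner_h_app_scale_op inner_h_app_add_op
    by (simp add: app_mmul app_app_ker_op[OF v] hermitian_inner_h_ker_op[OF herm v])
  also have "\<dots> = inner_h N n (app N n (adj L) v) (app N n \<rho> (app N n (adj L) v))"
    by (rule inner_h_app_adj)
  finally show ?thesis .
qed

lemma generator_quadratic_form_ker_op: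
  assumes herm: "hermitian N n \<rho>" and v: "v \<in> ker_op N n \<rho>"
  shows "inner_h N n v (app N n (generator N n G g \<rho>) v)
       = (\<Sum>w\<in>freqs N. \<Sum>e\<in>{SMinus, SPlus}.
            inner_h N n (app N n (adj (kraus N n G e w)) v)
              (app N n \<rho> (app N n (adj (kraus N n G e w)) v)))"
  unfolding generator_def
  by (simp add: inner_h_app_diff_op inner_h_app_scale_op inner_h_app_add_op inner_h_app_sum_op
      app_mmul app_app_ker_op[OF v] hermitian_inner_h_ker_op[OF herm v]
      dissip_quadratic_form_ker_op[OF herm v])

lemma invariant_ker_op_adj_kraus:
  assumes st: "is_state N n \<rho>" and inv: "invariant N n G g \<rho>"
    and v: "v \<in> ker_op N n \<rho>" and w: "w \<in> freqs N"
  shows "app N n (adj (kraus N n G e w)) v \<in> ker_op N n \<rho>"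
proof -
  define R where "R e w = inner_h N n (app N n (adj (kraus N n G e w)) v)
      (app N n \<rho> (app N n (adj (kraus N n G e w)) v))" for e w
  have R: "0 \<le> R e w" for e w unfolding R_def by (rule state_quadratic_form_nonneg[OF st])
  have fin: "finite (freqs N)" unfolding freqs_def by simp
  have "(\<Sum>w\<in>freqs N. \<Sum>e\<in>{SMinus, SPlus}. R e w) = 0"
    using generator_quadratic_form_ker_op[OF state_hermitian[OF st] v, of G g] inv
    unfolding R_def invariant_def by (simp add: inner_h_def app_def)
  then have "\<forall>w\<in>freqs N. \<forall>e\<in>{SMinus, SPlus}. R e w = 0"
    using fin R by (simp add: sum_nonneg_eq_0_iff add_nonneg_eq_0_iff)
  moreover have "e \<in> {SMinus, SPlus}" by (cases e) auto
  ultimately have "R e w = 0" using w by blast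
  then show ?thesis unfolding R_def by (rule state_quadratic_form_zero_imp_ker_op[OF st])
qed

lemma invariant_ker_op_Zk:
  assumes st: "is_state N n \<rho>" and inv: "invariant N n G g \<rho>"
    and v: "v \<in> ker_op N n \<rho>" and k: "k \<in> {1..N-1}" and G: "0 < G SPlus (Wk k)"
  shows "app N n (Zk N n k) v \<in> ker_op N n \<rho>"
proof -
  have "Wk k \<in> freqs N" using k unfolding freqs_def by auto
  then have "app N n (adj (kraus N n G SPlus (Wk k))) v \<in> ker_op N n \<rho>"
    by (rule invariant_ker_op_adj_kraus[OF st inv v])
  moreover have "adj (kraus N n G SPlus (Wk k)) = (\<lambda>i j. csqrt_r (G SPlus (Wk k)) * Zk N n k i j)"
    unfolding kraus_def adj_def csqrt_r_def by simp
  ultimately show ?thesis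
    using G by (simp add: app_scale_op ker_op_scale_iff csqrt_r_def)
qed

lemma invariant_ker_op_adj_Zk:
  assumes st: "is_state N n \<rho>" and inv: "invariant N n G g \<rho>"
    and v: "v \<in> ker_op N n \<rho>" and k: "k \<in> {1..N-1}" and G: "0 < G SMinus (Wk k)"
  shows "app N n (adj (Zk N n k)) v \<in> ker_op N n \<rho>"
proof -
  have "Wk k \<in> freqs N" using k unfolding freqs_def by auto
  then have "app N n (adj (kraus N n G SMinus (Wk k))) v \<in> ker_op N n \<rho>"
    by (rule invariant_ker_op_adj_kraus[OF st inv v])
  moreover have "adj (kraus N n G SMinus (Wk k))
      = (\<lambda>i j. csqrt_r (G SMinus (Wk k)) * adj (Zk N n k) i j)"
    unfolding kraus_def adj_def csqrt_r_def by simp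
  ultimately show ?thesis
    using G by (simp add: app_scale_op ker_op_scale_iff csqrt_r_def)
qed

lemma invariant_ker_op_Ztr:
  assumes st: "is_state N n \<rho>" and inv: "invariant N n G g \<rho>"
    and v: "v \<in> ker_op N n \<rho>" and G: "\<And>e w. w \<in> freqs N \<Longrightarrow> 0 < G e w"
  shows "app N n (Ztr N n) v \<in> ker_op N n \<rho>" "app N n (adj (Ztr N n)) v \<in> ker_op N n \<rho>"
proof -
  have G_Wk: "0 < G e (Wk k)" if "k \<in> {1..N-1}" for e k
    using G that unfolding freqs_def by auto
  have Ztr: "Ztr N n = (\<lambda>i j. \<Sum>k\<in>{1..N-1}. Zk N n k i j)"
    and adj_Ztr: "adj (Ztr N n) = (\<lambda>i j. \<Sum>k\<in>{1..N-1}. adj (Zk N n k) i j)"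
    unfolding Ztr_def adj_def by simp_all
  show "app N n (Ztr N n) v \<in> ker_op N n \<rho>"
    unfolding Ztr app_sum_op using G_Wk by (auto intro!: ker_op_sum invariant_ker_op_Zk[OF st inv v])
  show "app N n (adj (Ztr N n)) v \<in> ker_op N n \<rho>"
    unfolding adj_Ztr app_sum_op using G_Wk
    by (auto intro!: ker_op_sum invariant_ker_op_adj_Zk[OF st inv v])
qed

subsection \<open>The transport operators on the vectors phi_{0_k}\<close>

lemma sum_power_root_unity:
  assumes "0 < b" "b < m"
  shows "(\<Sum>a<m. cis (2 * pi / real m) ^ (b * a)) = 0"
proof -
  define x where "x = cis (2 * pi / real m) ^ b"
  have roots: "bij_betw (\<lambda>k. cis (2 * pi * real k / real m)) {..<m} {z. z ^ m = 1}"
    using assms by (intro bij_betw_roots_unity) simp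
  have x: "x = cis (2 * pi * real b / real m)"
    unfolding x_def DeMoivre by (simp add: mult_ac)
  have "x ^ m = 1" using bij_betw_apply[OF roots, of b] assms x by simp
  moreover have "x \<noteq> 1"
    using bij_betw_imp_inj_on[OF roots] assms x unfolding inj_on_def
    by (metis cis_zero lessThan_iff mult_zero_right not_less_zero of_nat_0 div_0 less_trans)
  ultimately have "(\<Sum>a<m. x ^ a) = 0" by (simp add: geometric_sum)
  then show ?thesis unfolding x_def by (simp add: power_mult)
qed

lemma Zk_phi0:
  assumes "1 \<le> k" "k + 1 \<le> N" "n (k + 1) \<le> n k" "1 \<le> n (k + 1)"
  shows "app N n (Zk N n k) (phi N n k 0) = ket (Site (k + 1) 0)"
proof
  fix i
  show "app N n (Zk N n k) (phi N n k 0) i = ket (Site (k + 1) 0) i"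
  proof (cases "\<exists>b. i = Site (k + 1) b \<and> b < n (k + 1)")
    case True
    then obtain b where i: "i = Site (k + 1) b" and b: "b < n (k + 1)" by blast
    have nk: "0 < n k" using assms by simp
    have "app N n (Zk N n k) (phi N n k 0) i
        = (\<Sum>a<n k. Zk N n k i (Site k a) * phi N n k 0 (Site k a))"
      unfolding app_def
      by (rule sum_basis_Site) (use assms in \<open>auto simp: i Zk_def split: idx.split\<close>)
    also have "\<dots> = (\<Sum>a<n k. zeta n k ^ (b * a) / of_nat (n k))"
    proof (rule sum.cong[OF refl])
      fix a assume "a \<in> {..<n k}"
      then show "Zk N n k i (Site k a) * phi N n k 0 (Site k a) = zeta n k ^ (b * a) / of_nat (n k)"
        using assms b nk unfolding i Zk_def phi_def by (simp add: field_simps flip: of_real_mult)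
    qed
    also have "\<dots> = (\<Sum>a<n k. zeta n k ^ (b * a)) / of_nat (n k)"
      by (simp add: sum_divide_distrib)
    also have "\<dots> = ket (Site (k + 1) 0) i"
    proof (cases "b = 0")
      case True
      then show ?thesis using nk by (simp add: i ket_def)
    next
      case False
      then show ?thesis using b assms sum_power_root_unity[of b "n k"] by (simp add: i ket_def zeta_def)
    qed
    finally show ?thesis .
  next
    case False
    then show ?thesis
      unfolding app_def ket_def using assms
      by (auto intro!: sum.neutral simp: Zk_def split: idx.split)
  qed
qed

lemma Zk_ket_Site0:
  assumes "1 \<le> k" "k + 1 \<le> N" "1 \<le> n k" "1 \<le> n (k + 1)"
  shows "app N n (Zk N n k) (ket (Site k 0))
       = (\<lambda>i. of_real (sqrt (real (n (k + 1))) / sqrt (real (n k))) * phi N n (k + 1) 0 i)"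
  using assms
  by (auto simp: app_ket Zk_def phi_def field_simps split: idx.split)

lemma invariant_ker_op_phi0_odd:
  assumes st: "is_state N n \<rho>" and inv: "invariant N n G g \<rho>"
    and G: "\<And>e w. w \<in> freqs N \<Longrightarrow> 0 < G e w"
    and mono: "\<And>k. 1 \<le> k \<Longrightarrow> k < N \<Longrightarrow> n (k + 1) \<le> n k"
    and pos: "\<And>k. 1 \<le> k \<Longrightarrow> k \<le> N \<Longrightarrow> 1 \<le> n k"
    and phi1: "phi N n 1 0 \<in> ker_op N n \<rho>"
  shows "2 * m + 1 \<le> N \<Longrightarrow> phi N n (2 * m + 1) 0 \<in> ker_op N n \<rho>"
proof (induction m)
  case 0
  then show ?case using phi1 by simp
next
  case (Suc m)
  define k where "k = 2 * m + 1"
  have k: "1 \<le> k" "k + 2 \<le> N" using Suc.prems by (auto simp: k_def)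
  have G_Wk: "0 < G e (Wk j)" if "j \<in> {1..N-1}" for e j
    using G that unfolding freqs_def by auto
  define c where "c = complex_of_real (sqrt (real (n (k + 2))) / sqrt (real (n (k + 1))))"
  have "phi N n k 0 \<in> ker_op N n \<rho>" using Suc unfolding k_def by simp
  then have "app N n (Zk N n k) (phi N n k 0) \<in> ker_op N n \<rho>"
    using k by (intro invariant_ker_op_Zk[OF st inv] G_Wk) auto
  moreover have "app N n (Zk N n k) (phi N n k 0) = ket (Site (k + 1) 0)"
    using k by (intro Zk_phi0 mono pos) auto
  ultimately have "ket (Site (k + 1) 0) \<in> ker_op N n \<rho>" by simp
  then have "app N n (Zk N n (k + 1)) (ket (Site (k + 1) 0)) \<in> ker_op N n \<rho>"
    using k by (intro invariant_ker_op_Zk[OF st inv] G_Wk) auto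
  moreover have "app N n (Zk N n (k + 1)) (ket (Site (k + 1) 0)) = (\<lambda>i. c * phi N n (k + 2) 0 i)"
    using Zk_ket_Site0[of "k + 1" N n] k pos[of "k + 1"] pos[of "k + 2"] by (simp add: c_def)
  moreover have "c \<noteq> 0"
    using k pos[of "k + 1"] pos[of "k + 2"] by (simp add: c_def)
  ultimately have "phi N n (k + 2) 0 \<in> ker_op N n \<rho>"
    by (simp add: ker_op_scale_iff)
  then show ?case by (simp add: k_def)
qed

theorem proposition3p11:
  fixes N :: nat and n :: "nat \<Rightarrow> nat"
    and G g :: "sign \<Rightarrow> freq \<Rightarrow> real" and \<rho> :: op
  assumes "N \<ge> 2"
    and "\<And>k. 1 \<le> k \<Longrightarrow> k < N \<Longrightarrow> n (k + 1) \<le> n k"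
    and "\<And>k. 1 \<le> k \<Longrightarrow> k \<le> N \<Longrightarrow> 1 \<le> n k"
    and "\<And>e w. w \<in> freqs N \<Longrightarrow> G e w > 0"
    and "is_state N n \<rho>"
    and "invariant N n G g \<rho>"
    and "supported_on N n \<rho> (Omega N n)"
  shows "supported_on N n \<rho> (Vsp N n)"
proof -
  note G = assms(4) and st = assms(5) and inv = assms(6)
  have herm: "hermitian N n \<rho>" using st by (rule state_hermitian)
  have op: "is_operator N n \<rho>" using st unfolding is_state_def by simp
  have "{ket KMinus, ket KPlus, phi N n 1 0, phi N n N 0} \<subseteq> ker_op N n \<rho>"
    using assms(7) unfolding Omega_def supported_on_perp_iff_ker_op[OF herm op] .
  then have phi1: "phi N n 1 0 \<in> ker_op N n \<rho>" and phiN: "phi N n N 0 \<in> ker_op N n \<rho>"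
    by auto
  have iter: "(app N n (Ztr N n) ^^ m) v \<in> ker_op N n \<rho>"
    "(app N n (adj (Ztr N n)) ^^ m) v \<in> ker_op N n \<rho>" if "v \<in> ker_op N n \<rho>" for m v
    using that by (induction m) (simp_all add: invariant_ker_op_Ztr[OF st inv _ G])
  have odd: "phi N n (2 * m + 1) 0 \<in> ker_op N n \<rho>" if "2 * m + 1 \<le> N" for m
    using invariant_ker_op_phi0_odd[OF st inv G assms(2,3) phi1 that] .
  have "{(app N n (Ztr N n) ^^ m) (phi N n 1 0) | m. m \<le> N - 1} \<subseteq> ker_op N n \<rho>"
    using iter(1)[OF phi1] by blast
  moreover have "{(app N n (adj (Ztr N n)) ^^ m) (phi N n N 0) | m. m \<le> N - 1} \<subseteq> ker_op N n \<rho>"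
    using iter(2)[OF phiN] by blast
  moreover have "{(app N n (adj (Ztr N n)) ^^ s) (phi N n (2 * m + 1) 0) | m s.
      1 \<le> m \<and> 2 * m + 1 \<le> N \<and> 1 \<le> s \<and> s \<le> 2 * m} \<subseteq> ker_op N n \<rho>"
    using iter(2)[OF odd] by blast
  ultimately show ?thesis
    unfolding Vsp_def supported_on_perp_iff_ker_op[OF herm op] by blast
qed

end
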